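(* Let $n\ge 4$ be even. Let the multiplicative group $\Gamma=\mathbb R_{>0}^n$ act on $\mathbb R_{>0}^{E_n}$ by $\lambda\cdot x=(\lambda_i\lambda_j x_{\{i,j\}})_{\{i,j\}\in E_n}$ for $\lambda\in\Gamma$, $x\in\mathbb R_{>0}^{E_n}$. Then every $\Gamma$-invariant subset of $\mathbb R_{>0}^{E_n}$ is fiber-invariant for the map $\varphi:\mathbb R_{>0}^{E_n}\to\mathbb R_{>0}^{\mathcal M_n}$, $\varphi(x)=(x_M)_{M\in\mathcal M_n}$, where $x_M=\prod_{e\in M}x_e$.
   Context: $E_n$ denotes the set of edges of the complete graph on vertex set $[n]=\{1,\dots,n\}$ (i.e. the 2-element subsets of $[n]$), and $\mathcal M_n$ denotes the set of perfect matchings of this complete graph. For a map $f:X\to Y$, a subset $D\subseteq X$ is fiber-invariant for $f$ if for every $y\in f(D)$ the whole fiber $f^{-1}(y)$ is contained in $D$. *)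

theory Defs
  imports Complex_Main "HOL-Library.FuncSet"
begin

definition edges :: "nat \<Rightarrow> nat set set" where
  "edges n = {e. e \<subseteq> {1..n} \<and> card e = 2}"

definition perfect_matchings :: "nat \<Rightarrow> nat set set set" where
  "perfect_matchings n = {M. M \<subseteq> edges n \<and> (\<forall>v\<in>{1..n}. \<exists>!e. e \<in> M \<and> v \<in> e)}"

definition pos_edge_space :: "nat \<Rightarrow> (nat set \<Rightarrow> real) set" where
  "pos_edge_space n = edges n \<rightarrow>\<^sub>E {0<..}"

definition Gamma :: "nat \<Rightarrow> (nat \<Rightarrow> real) set" where
  "Gamma n = {1..n} \<rightarrow>\<^sub>E {0<..}"

definition act :: "nat \<Rightarrow> (nat \<Rightarrow> real) \<Rightarrow> (nat set \<Rightarrow> real) \<Rightarrow> (nat set \<Rightarrow> real)" where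
  "act n lam x = (\<lambda>e\<in>edges n. (\<Prod>i\<in>e. lam i) * x e)"

definition Gamma_invariant :: "nat \<Rightarrow> (nat set \<Rightarrow> real) set \<Rightarrow> bool" where
  "Gamma_invariant n D \<longleftrightarrow> D \<subseteq> pos_edge_space n \<and>
     (\<forall>lam\<in>Gamma n. \<forall>x\<in>D. act n lam x \<in> D)"

definition phi :: "nat \<Rightarrow> (nat set \<Rightarrow> real) \<Rightarrow> (nat set set \<Rightarrow> real)" where
  "phi n x = (\<lambda>M\<in>perfect_matchings n. \<Prod>e\<in>M. x e)"

definition fiber_invariant :: "('a \<Rightarrow> 'b) \<Rightarrow> 'a set \<Rightarrow> 'a set \<Rightarrow> bool" where
  "fiber_invariant f X D \<longleftrightarrow> D \<subseteq> X \<and> (\<forall>y\<in>f ` D. {x\<in>X. f x = y} \<subseteq> D)"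

end

theory Submission
  imports Defs
begin

(* If phi x = phi y, put w_e = ln (y_e / x_e). Completing the pairs {ij, kl} and {ik, jl} by one
   common perfect matching of the remaining n - 4 vertices (n is even) gives the exchange relation
   w_ij + w_kl = w_ik + w_jl for all distinct i, j, k, l. Such a w is a sum of vertex potentials,
   w_ij = a_i + a_j with a_i = (w_ip + w_iq - w_pq) / 2, so y = lambda . x for lambda_i = exp a_i,
   and any Gamma-invariant set containing x contains y. *)

definition perfect_matching_on :: "'a set \<Rightarrow> 'a set set \<Rightarrow> bool" where
  "perfect_matching_on S M \<longleftrightarrow>
     M \<subseteq> {e. e \<subseteq> S \<and> card e = 2} \<and> (\<forall>v\<in>S. \<exists>!e. e \<in> M \<and> v \<in> e)"

lemma perfect_matchings_iff: "M \<in> perfect_matchings n \<longleftrightarrow> perfect_matching_on {1..n} M"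
  by (simp add: perfect_matchings_def perfect_matching_on_def edges_def)

lemma perfect_matching_on_finite:
  assumes "finite S" "perfect_matching_on S M"
  shows "finite M"
proof (rule finite_subset)
  show "M \<subseteq> Pow S" using assms(2) by (auto simp: perfect_matching_on_def)
qed (use assms(1) in simp)

lemma perfect_matching_on_insert:
  assumes M: "perfect_matching_on (S - {a, b}) M" and "a \<in> S" "b \<in> S" "a \<noteq> b"
  shows "perfect_matching_on S (insert {a, b} M)"
  unfolding perfect_matching_on_def
proof (intro conjI ballI)
  show "insert {a, b} M \<subseteq> {e. e \<subseteq> S \<and> card e = 2}"
    using M assms(2-4) by (auto simp: perfect_matching_on_def)
next
  fix v assume "v \<in> S"
  show "\<exists>!e. e \<in> insert {a, b} M \<and> v \<in> e"
  proof (cases "v \<in> {a, b}")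
    case True
    have "v \<notin> e" if "e \<in> M" for e
      using M that True by (auto simp: perfect_matching_on_def)
    then show ?thesis using True by (intro ex1I[of _ "{a, b}"]) auto
  next
    case False
    then have "\<exists>!e. e \<in> M \<and> v \<in> e"
      using M \<open>v \<in> S\<close> by (simp add: perfect_matching_on_def)
    then show ?thesis using False by auto
  qed
qed

lemma prod_insert_matched_edge:
  assumes "finite S" "perfect_matching_on (S - {a, b}) M"
  shows "prod z (insert {a, b} M) = z {a, b} * prod z M"
proof -
  have "{a, b} \<notin> M" using assms(2) by (auto simp: perfect_matching_on_def)
  moreover have "finite M" using assms by (intro perfect_matching_on_finite) auto
  ultimately show ?thesis by simp
qed

lemma perfect_matching_on_exists:
  assumes "finite S" "even (card S)"
  shows "\<exists>M. perfect_matching_on S M"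
  using assms
proof (induction "card S" arbitrary: S rule: less_induct)
  case less
  show ?case
  proof (cases "S = {}")
    case True
    then show ?thesis by (auto simp: perfect_matching_on_def)
  next
    case False
    then obtain a where "a \<in> S" by blast
    have "S \<noteq> {a}" using less.prems(2) by auto
    with \<open>a \<in> S\<close> obtain b where ab: "a \<in> S" "b \<in> S" "a \<noteq> b" by blast
    have "card S > 0" using less.prems(1) ab by (auto simp: card_gt_0_iff)
    have "card (S - {a, b}) = card S - 2"
      using less.prems(1) ab by (simp add: card_Diff_subset)
    then have "card (S - {a, b}) < card S" "even (card (S - {a, b}))"
      using \<open>card S > 0\<close> less.prems(2) by auto
    then obtain M where "perfect_matching_on (S - {a, b}) M"
      using less.hyps less.prems(1) by blast
    then show ?thesis using ab by (blast intro: perfect_matching_on_insert)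
  qed
qed

lemma exchange_imp_vertex_sum:
  fixes w :: "'a set \<Rightarrow> real"
  assumes "finite V" "card V \<ge> 3"
    and exchange: "\<And>i j k l. i \<in> V \<Longrightarrow> j \<in> V \<Longrightarrow> k \<in> V \<Longrightarrow> l \<in> V \<Longrightarrow>
      distinct [i, j, k, l] \<Longrightarrow> w {i, j} + w {k, l} = w {i, k} + w {j, l}"
  shows "\<exists>a. \<forall>i\<in>V. \<forall>j\<in>V. i \<noteq> j \<longrightarrow> w {i, j} = a i + a j"
proof -
  \<comment> \<open>The potential of i read off the triangle i, p, q; the exchange condition makes it
      independent of p and q.\<close>
  define A where "A i p q = (w {i, p} + w {i, q} - w {p, q}) / 2" for i p q
  have A_swap: "A i p q = A i q p" for i p q
    unfolding A_def by (simp add: insert_commute)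
  have A_change: "A i p q = A i p r"
    if "i \<in> V" "p \<in> V" "q \<in> V" "r \<in> V" "distinct [i, p, q]" "distinct [i, p, r]" for i p q r
  proof (cases "q = r")
    case False
    then have "w {i, q} + w {r, p} = w {i, r} + w {q, p}"
      using exchange[of i q r p] that by auto
    then show ?thesis unfolding A_def by (simp add: insert_commute)
  qed simp
  have A_indep: "A i p q = A i p' q'"
    if "i \<in> V" "p \<in> V" "q \<in> V" "p' \<in> V" "q' \<in> V"
       "distinct [i, p, q]" "distinct [i, p', q']" for i p q p' q'
  proof (cases "p' = q")
    case False
    have "A i p q = A i q p'" using A_swap A_change[of i q p p'] that False by auto
    also have "\<dots> = A i p' q'" using A_swap A_change[of i p' q q'] that False by auto
    finally show ?thesis .
  next
    case True
    then show ?thesis using A_swap A_change[of i q p q'] that by auto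
  qed
  have third_vertex: "\<exists>k\<in>V. k \<noteq> i \<and> k \<noteq> j" for i j
  proof (rule ccontr)
    assume "\<not> ?thesis"
    then have "card V \<le> card {i, j}" by (intro card_mono) auto
    also have "\<dots> \<le> 2" by (cases "i = j") simp_all
    finally show False using assms(2) by simp
  qed
  define a where "a i = (SOME c. \<exists>p\<in>V. \<exists>q\<in>V. distinct [i, p, q] \<and> c = A i p q)" for i
  have a_eq: "a i = A i p q" if "i \<in> V" "p \<in> V" "q \<in> V" "distinct [i, p, q]" for i p q
  proof -
    have "\<exists>c. \<exists>p\<in>V. \<exists>q\<in>V. distinct [i, p, q] \<and> c = A i p q"
      using that by blast
    from someI_ex[OF this, folded a_def] obtain p' q'
      where "p' \<in> V" "q' \<in> V" "distinct [i, p', q']" "a i = A i p' q'"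
      by blast
    then show ?thesis using A_indep[of i p' q' p q] that by simp
  qed
  have "w {i, j} = a i + a j" if "i \<in> V" "j \<in> V" "i \<noteq> j" for i j
  proof -
    obtain k where "k \<in> V" "k \<noteq> i" "k \<noteq> j" using third_vertex by blast
    then have "a i = A i j k" "a j = A j i k" using a_eq[of i j k] a_eq[of j i k] that by auto
    then show ?thesis unfolding A_def by (simp add: insert_commute)
  qed
  then show ?thesis by blast
qed

lemma doubleton_in_edges: "i \<in> {1..n} \<Longrightarrow> j \<in> {1..n} \<Longrightarrow> i \<noteq> j \<Longrightarrow> {i, j} \<in> edges n"
  unfolding edges_def by auto

lemma pos_edge_space_pos: "x \<in> pos_edge_space n \<Longrightarrow> e \<in> edges n \<Longrightarrow> 0 < x e"
  unfolding pos_edge_space_def by auto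

lemma phi_eq_imp_exchange:
  assumes x: "x \<in> pos_edge_space n" and y: "y \<in> pos_edge_space n"
    and phi_eq: "phi n x = phi n y" and "even n"
    and ijkl: "i \<in> {1..n}" "j \<in> {1..n}" "k \<in> {1..n}" "l \<in> {1..n}" "distinct [i, j, k, l]"
  shows "y {i, j} / x {i, j} * (y {k, l} / x {k, l}) = y {i, k} / x {i, k} * (y {j, l} / x {j, l})"
proof -
  define S where "S = {1..n} - {i, j, k, l}"
  have sub: "{i, j, k, l} \<subseteq> {1..n}" and card4: "card {i, j, k, l} = 4" using ijkl by auto
  then have "card S = n - 4" unfolding S_def by (simp add: card_Diff_subset)
  moreover have "4 \<le> n" using card_mono[OF _ sub] card4 by simp
  ultimately have "even (card S)" using \<open>even n\<close> by simp
  then obtain M where M: "perfect_matching_on S M"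
    using perfect_matching_on_exists[of S] unfolding S_def by blast
  have completed:
    "insert {p, q} (insert {r, s} M) \<in> perfect_matchings n \<and>
     prod z (insert {p, q} (insert {r, s} M)) = z {p, q} * z {r, s} * prod z M"
    if "{p, q, r, s} = {i, j, k, l}" "distinct [p, q, r, s]" for p q r s and z :: "nat set \<Rightarrow> real"
  proof -
    have "{1..n} - {p, q} - {r, s} = S" using that(1) unfolding S_def by auto
    then have M_rest: "perfect_matching_on ({1..n} - {p, q} - {r, s}) M" using M by simp
    have pqrs: "p \<in> {1..n}" "q \<in> {1..n}" "r \<in> {1..n}" "s \<in> {1..n}"
      using sub unfolding that(1)[symmetric] by auto
    have M_pq: "perfect_matching_on ({1..n} - {p, q}) (insert {r, s} M)"
      by (rule perfect_matching_on_insert[OF M_rest]) (use pqrs that(2) in auto)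
    then have "perfect_matching_on {1..n} (insert {p, q} (insert {r, s} M))"
      by (rule perfect_matching_on_insert) (use pqrs that(2) in auto)
    moreover have "prod z (insert {p, q} (insert {r, s} M)) = z {p, q} * z {r, s} * prod z M"
      by (simp only: prod_insert_matched_edge[OF finite_atLeastAtMost M_pq]
          prod_insert_matched_edge[OF finite_Diff[OF finite_atLeastAtMost] M_rest] mult.assoc)
    ultimately show ?thesis by (simp add: perfect_matchings_iff)
  qed
  have prod_eq: "prod x N = prod y N" if "N \<in> perfect_matchings n" for N
    using fun_cong[OF phi_eq, of N] that by (simp add: phi_def)
  have "M \<subseteq> edges n" using M unfolding S_def perfect_matching_on_def edges_def by auto
  then have PM: "prod x M > 0" "prod y M > 0"
    using pos_edge_space_pos[OF x] pos_edge_space_pos[OF y] by (auto intro!: prod_pos)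
  \<comment> \<open>Both completions of M share the factor on the other n - 4 vertices.\<close>
  have ratio: "y {p, q} / x {p, q} * (y {r, s} / x {r, s}) = prod x M / prod y M"
    if "{p, q, r, s} = {i, j, k, l}" "distinct [p, q, r, s]" for p q r s
  proof -
    have "x {p, q} * x {r, s} * prod x M = y {p, q} * y {r, s} * prod y M"
      using completed[OF that] prod_eq by metis
    moreover have "x {p, q} > 0" "x {r, s} > 0"
      using that ijkl by (auto intro!: pos_edge_space_pos[OF x] doubleton_in_edges)
    ultimately show ?thesis using PM by (simp add: field_simps)
  qed
  show ?thesis
    using ratio[of i j k l] ratio[of i k j l] ijkl(5) by (simp add: insert_commute)
qed

lemma act_exp_potential_eq:
  assumes a: "\<And>i j. i \<in> {1..n} \<Longrightarrow> j \<in> {1..n} \<Longrightarrow> i \<noteq> j \<Longrightarrow> ln (y {i, j} / x {i, j}) = a i + a j"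
    and x: "x \<in> pos_edge_space n" and y: "y \<in> pos_edge_space n"
  shows "act n (\<lambda>i\<in>{1..n}. exp (a i)) x = y"
proof
  fix e
  show "act n (\<lambda>i\<in>{1..n}. exp (a i)) x e = y e"
  proof (cases "e \<in> edges n")
    case True
    then obtain i j where e: "e = {i, j}" "i \<in> {1..n}" "j \<in> {1..n}" "i \<noteq> j"
      unfolding edges_def by (auto simp: card_2_iff)
    have pos: "x e > 0" "y e > 0" using True x y by (auto intro: pos_edge_space_pos)
    with e have "(\<Prod>v\<in>e. (\<lambda>i\<in>{1..n}. exp (a i)) v) = y e / x e"
      using a[of i j, symmetric] by (simp add: exp_add[symmetric])
    then show ?thesis using True pos by (simp add: act_def)
  next
    case False
    then show ?thesis using y by (simp add: act_def pos_edge_space_def PiE_def extensional_def)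
  qed
qed

lemma phi_eq_imp_orbit:
  assumes x: "x \<in> pos_edge_space n" and y: "y \<in> pos_edge_space n"
    and "phi n x = phi n y" "even n" "n \<ge> 4"
  shows "\<exists>lam\<in>Gamma n. act n lam x = y"
proof -
  define w where "w e = ln (y e / x e)" for e
  have pos: "x e > 0" "y e > 0" if "e \<in> edges n" for e
    using that x y by (auto intro: pos_edge_space_pos)
  have "w {i, j} + w {k, l} = w {i, k} + w {j, l}"
    if "i \<in> {1..n}" "j \<in> {1..n}" "k \<in> {1..n}" "l \<in> {1..n}" "distinct [i, j, k, l]"
    for i j k l
  proof -
    have "{i, j} \<in> edges n" "{k, l} \<in> edges n" "{i, k} \<in> edges n" "{j, l} \<in> edges n"
      using that by (auto intro: doubleton_in_edges)
    then have quot_pos: "0 < y {i, j} / x {i, j}" "0 < y {k, l} / x {k, l}"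
        "0 < y {i, k} / x {i, k}" "0 < y {j, l} / x {j, l}"
      using pos by auto
    have "w {i, j} + w {k, l} = ln (y {i, j} / x {i, j} * (y {k, l} / x {k, l}))"
      unfolding w_def by (rule ln_mult_pos[OF quot_pos(1,2), symmetric])
    also have "\<dots> = ln (y {i, k} / x {i, k} * (y {j, l} / x {j, l}))"
      using phi_eq_imp_exchange[OF x y assms(3,4) that] by (rule arg_cong)
    also have "\<dots> = w {i, k} + w {j, l}"
      unfolding w_def by (rule ln_mult_pos[OF quot_pos(3,4)])
    finally show ?thesis .
  qed
  then have "\<exists>a. \<forall>i\<in>{1..n}. \<forall>j\<in>{1..n}. i \<noteq> j \<longrightarrow> w {i, j} = a i + a j"
    using \<open>n \<ge> 4\<close> by (intro exchange_imp_vertex_sum) auto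
  then obtain a where a: "\<And>i j. i \<in> {1..n} \<Longrightarrow> j \<in> {1..n} \<Longrightarrow> i \<noteq> j \<Longrightarrow> w {i, j} = a i + a j"
    by blast
  then have "act n (\<lambda>i\<in>{1..n}. exp (a i)) x = y"
    using x y unfolding w_def by (rule act_exp_potential_eq)
  moreover have "(\<lambda>i\<in>{1..n}. exp (a i)) \<in> Gamma n" unfolding Gamma_def by auto
  ultimately show ?thesis by blast
qed

theorem theorem4p4:
  fixes n :: nat and D :: "(nat set \<Rightarrow> real) set"
  assumes "even n" and "n \<ge> 4"
    and "D \<subseteq> pos_edge_space n" and "Gamma_invariant n D"
  shows "fiber_invariant (phi n) (pos_edge_space n) D"
proof -
  have "y \<in> D" if "x \<in> D" and y: "y \<in> pos_edge_space n" and eq: "phi n y = phi n x" for x y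
  proof -
    have "x \<in> pos_edge_space n" using \<open>x \<in> D\<close> assms(3) by blast
    then obtain lam where "lam \<in> Gamma n" "act n lam x = y"
      using phi_eq_imp_orbit y eq[symmetric] assms(1,2) by blast
    then show ?thesis using assms(4) \<open>x \<in> D\<close> unfolding Gamma_invariant_def by blast
  qed
  then show ?thesis using assms(3) unfolding fiber_invariant_def by blast
qed

end
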